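(* Let $1<n\leq m$ be integers. If $2\mid(m-n)$ or $n\leq\lceil\frac{m+1}{2}\rceil$, then $$\operatorname{ecc}_{Z_{n,m}}(0)=d(u^{(0)},0)=\binom{\lfloor\frac{m+n}{2}\rfloor+1}{2}+\binom{\lceil\frac{m-n}{2}\rceil+1}{2}.$$ Otherwise, $$\operatorname{ecc}_{Z_{n,m}}(0)=d(u^{(1)},0)=d(u^{(0)},0)+n-\lceil\tfrac{m+1}{2}\rceil.$$
   Context: Elements of $\mathbb{Z}_n$ are identified with their representatives in $\{0,\dots,n-1\}$. The dYoke graph $Z_{n,m}$ has as vertices all $u=(u_0,\dots,u_{m+1})\in\mathbb{Z}_n\times\{-1,0,1\}^m\times\mathbb{Z}_n$ with $\sum_{i=0}^{m+1}u_i\equiv0\pmod n$; $u,v$ are adjacent if there is $0\leq i\leq m$ such that $u_j=v_j$ for all $j\notin\{i,i+1\}$ and either ($u_i=v_i+1$, $u_{i+1}=v_{i+1}-1$) or ($u_i=v_i-1$, $u_{i+1}=v_{i+1}+1$), arithmetic in coordinates $0,m+1$ being in $\mathbb{Z}_n$. $0$ is the all-zero vertex, $d$ is graph distance in $Z_{n,m}$, $\operatorname{ecc}_{Z_{n,m}}(0)=\max_v d(v,0)$. $u^{(0)}$ is the vertex with $u_i=1$ for $1\leq i\leq m$ and $u_0\equiv-\lfloor\frac{m-n}{2}\rfloor\pmod n$ (and $u_{m+1}$ determined by the sum condition). When $n<m$ and $m-n$ is odd, $u^{(1)}$ is the vertex with $u_{\lceil (m+1)/2\rceil}=0$, $u_i=1$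 for all other $1\leq i\leq m$, and $u_0\equiv-\lfloor\frac{m-n}{2}\rfloor\pmod n$. *)

theory Defs
  imports Main "HOL-Library.Extended_Nat"
begin

text \<open>Vertices of the dYoke graph Z_{n,m}: functions nat => int with
  u 0, u (m+1) in {0..n-1} (representatives of Z_n), u i in {-1,0,1} for 1 <= i <= m,
  u i = 0 for i > m+1 (canonical padding), and sum of u 0..u (m+1) congruent 0 mod n.\<close>
definition dyoke_vert :: "nat \<Rightarrow> nat \<Rightarrow> (nat \<Rightarrow> int) \<Rightarrow> bool" where
  "dyoke_vert n m u \<longleftrightarrow>
     u 0 \<in> {0..<int n} \<and> u (m+1) \<in> {0..<int n} \<and>
     (\<forall>i\<in>{1..m}. u i \<in> {-1,0,1}) \<and>
     (\<forall>i>m+1. u i = 0) \<and>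
     (\<Sum>i\<le>m+1. u i) mod int n = 0"

text \<open>Equality of coordinate j; coordinates 0 and m+1 live in Z_n.\<close>
definition coord_eq :: "nat \<Rightarrow> nat \<Rightarrow> nat \<Rightarrow> int \<Rightarrow> int \<Rightarrow> bool" where
  "coord_eq n m j a b \<longleftrightarrow> (if j = 0 \<or> j = m+1 then a mod int n = b mod int n else a = b)"

definition dyoke_adj :: "nat \<Rightarrow> nat \<Rightarrow> (nat \<Rightarrow> int) \<Rightarrow> (nat \<Rightarrow> int) \<Rightarrow> bool" where
  "dyoke_adj n m u v \<longleftrightarrow> dyoke_vert n m u \<and> dyoke_vert n m v \<and>
     (\<exists>i\<le>m. (\<forall>j\<le>m+1. j \<noteq> i \<and> j \<noteq> i+1 \<longrightarrow> u j = v j) \<and>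
        ((coord_eq n m i (u i) (v i + 1) \<and> coord_eq n m (i+1) (u (i+1)) (v (i+1) - 1)) \<or>
         (coord_eq n m i (u i) (v i - 1) \<and> coord_eq n m (i+1) (u (i+1)) (v (i+1) + 1))))"

text \<open>Graph distance (infinity if unreachable).\<close>
definition dyoke_dist :: "nat \<Rightarrow> nat \<Rightarrow> (nat \<Rightarrow> int) \<Rightarrow> (nat \<Rightarrow> int) \<Rightarrow> enat" where
  "dyoke_dist n m u v = (INF k \<in> {k. (dyoke_adj n m ^^ k) u v}. enat k)"

definition dyoke_zero :: "nat \<Rightarrow> int" where
  "dyoke_zero = (\<lambda>_. 0)"

definition dyoke_ecc0 :: "nat \<Rightarrow> nat \<Rightarrow> enat" where
  "dyoke_ecc0 n m = (SUP v \<in> {v. dyoke_vert n m v}. dyoke_dist n m v dyoke_zero)"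

definition u0 :: "nat \<Rightarrow> nat \<Rightarrow> nat \<Rightarrow> int" where
  "u0 n m = (let a = (- int ((m - n) div 2)) mod int n in
     (\<lambda>i. if i = 0 then a else if i \<le> m then 1
          else if i = m+1 then (- (a + int m)) mod int n else 0))"

text \<open>u^(1): as u^(0) but coordinate ceil((m+1)/2) = (m+2) div 2 is 0.\<close>
definition u1 :: "nat \<Rightarrow> nat \<Rightarrow> nat \<Rightarrow> int" where
  "u1 n m = (let a = (- int ((m - n) div 2)) mod int n in
     (\<lambda>i. if i = 0 then a else if i = (m+2) div 2 then 0 else if i \<le> m then 1
          else if i = m+1 then (- (a + int m - 1)) mod int n else 0))"

end

theory Submission
  imports Defs
begin

text \<open>A vertex u is encoded by a lift: an integer sequence x_0, ..., x_m with x_0 = u_0 (mod n)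
  and steps x_i - x_(i-1) = u_i in {-1,0,1}, unique up to adding a multiple of n. An edge moves
  a single x_i by 1, so d(u,0) is the least cost |x_0| + ... + |x_m| of a lift of u.

  The lifts of u^(0) are the ramps x_i = i - c with c = floor((m+n)/2) (mod n); their cost,
  the sum of |i - c| over i \<le> m, is convex and symmetric in c, which gives d(u^(0),0).
  Conversely, put Q = ceil((m-n)/2). A lift either hits a multiple of n on the window [Q, m-Q],
  and shifting that value to 0 costs no more than the ramp, or it stays strictly between two
  consecutive multiples a, a+n there, and then the shifts by a and a+n together cost at most
  n(m+1) + 2Q(Q-1). When m-n is odd and n > ceil((m+1)/2), the lifts of u^(1), ramps with
  one value repeated in the middle, attain this second bound.\<close>

section \<open>Lifts of vertices\<close>

definition lipschitz_upto :: "nat \<Rightarrow> (nat \<Rightarrow> int) \<Rightarrow> bool" where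
  "lipschitz_upto m x \<longleftrightarrow> (\<forall>i\<in>{1..m}. \<bar>x i - x (i - 1)\<bar> \<le> 1)"

definition lift_cost :: "nat \<Rightarrow> (nat \<Rightarrow> int) \<Rightarrow> int" where
  "lift_cost m x = (\<Sum>i\<le>m. \<bar>x i\<bar>)"

definition is_lift :: "nat \<Rightarrow> nat \<Rightarrow> (nat \<Rightarrow> int) \<Rightarrow> (nat \<Rightarrow> int) \<Rightarrow> bool" where
  "is_lift n m u x \<longleftrightarrow> x 0 mod int n = u 0 \<and> (\<forall>i\<in>{1..m}. x i - x (i - 1) = u i)"

text \<open>The vertex lifted by \<open>x\<close>; its last coordinate is the one forced by the sum condition.\<close>

definition vertex_of :: "nat \<Rightarrow> nat \<Rightarrow> (nat \<Rightarrow> int) \<Rightarrow> nat \<Rightarrow> int" where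
  "vertex_of n m x = (\<lambda>j. if j = 0 then x 0 mod int n else if j \<le> m then x j - x (j - 1)
      else if j = m + 1 then (- x m) mod int n else 0)"

lemma sum_atMost_split_first: "(\<Sum>i\<le>m. f i) = f 0 + (\<Sum>i\<in>{1..m}. f i)"
  for f :: "nat \<Rightarrow> 'a::comm_monoid_add"
  by (simp add: atMost_atLeast0 sum.atLeast_Suc_atMost)

lemma sum_telescope_atLeast1: "(\<Sum>j\<in>{1..m}. x j - x (j - 1)) = x m - x 0"
  for x :: "nat \<Rightarrow> int" and m :: nat
  by (induction m) (auto simp: sum.atLeast_Suc_atMost_Suc_shift)

lemma lipschitz_upto_abs_diff_le:
  assumes "lipschitz_upto m x" "i \<le> m" "j \<le> m"
  shows "\<bar>x j - x i\<bar> \<le> \<bar>int j - int i\<bar>"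
proof -
  have "\<bar>x j - x i\<bar> \<le> int (j - i)" if "i \<le> j" "j \<le> m" for i j
    using that
  proof (induction j)
    case (Suc j)
    show ?case
    proof (cases "i = Suc j")
      case False
      then have "\<bar>x j - x i\<bar> \<le> int (j - i)" using Suc by simp
      moreover have "\<bar>x (Suc j) - x j\<bar> \<le> 1"
        using assms(1) Suc.prems unfolding lipschitz_upto_def by force
      ultimately show ?thesis using False Suc.prems by (simp add: of_nat_diff)
    qed simp
  qed simp
  from this[of i j] this[of j i] assms show ?thesis
    by (cases "i \<le> j") (auto simp: of_nat_diff abs_minus_commute)
qed

lemma dyoke_vert_vertex_of:
  assumes "0 < n" "lipschitz_upto m x"
  shows "dyoke_vert n m (vertex_of n m x)"
proof -
  have "(\<Sum>i\<le>m+1. vertex_of n m x i) = x 0 mod int n + (\<Sum>i\<in>{1..m}. x i - x (i - 1)) + (- x m) mod int n"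
    by (simp add: sum_atMost_split_first[of _ m] vertex_of_def)
  also have "\<dots> = x 0 mod int n + (x m - x 0) + (- x m) mod int n"
    using sum_telescope_atLeast1[of x m] by simp
  finally have "(\<Sum>i\<le>m+1. vertex_of n m x i) mod int n = 0"
    by (simp add: mod_simps)
  moreover have "\<forall>i\<in>{1..m}. vertex_of n m x i \<in> {-1,0,1}"
    using assms(2) by (auto simp: vertex_of_def lipschitz_upto_def abs_le_iff)
  ultimately show ?thesis
    using assms(1) unfolding dyoke_vert_def by (simp add: vertex_of_def)
qed

lemma is_lift_vertex_of: "is_lift n m (vertex_of n m x) x"
  unfolding is_lift_def vertex_of_def by auto

lemma is_lift_lipschitz_upto: "dyoke_vert n m u \<Longrightarrow> is_lift n m u x \<Longrightarrow> lipschitz_upto m x"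
  unfolding dyoke_vert_def is_lift_def lipschitz_upto_def by fastforce

lemma is_lift_shift: "is_lift n m u x \<Longrightarrow> int n dvd c \<Longrightarrow> is_lift n m u (\<lambda>i. x i - c)"
  unfolding is_lift_def by (auto simp: mod_diff_right_eq[of "x 0" c, symmetric] dvd_imp_mod_0)

lemma vertex_of_is_lift:
  assumes "dyoke_vert n m u" "is_lift n m u x"
  shows "vertex_of n m x = u"
proof
  fix j
  have "(\<Sum>i\<le>m+1. u i) mod int n = 0" and "u 0 mod int n = u 0" and "u (m+1) mod int n = u (m+1)"
    using assms(1) by (auto simp: dyoke_vert_def)
  moreover have "(\<Sum>j\<in>{1..m}. u j) = x m - x 0"
    using assms(2) sum_telescope_atLeast1[of x m] by (simp add: is_lift_def)
  ultimately have "(x 0 mod int n + (x m - x 0) + u (m+1)) mod int n = 0"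
    using assms(2) by (simp add: sum_atMost_split_first[of _ m] is_lift_def)
  then have "(x m + u (m+1)) mod int n = 0"
    by (simp only: add.assoc mod_add_left_eq) simp
  then have "u (m+1) = (- x m) mod int n"
    using \<open>u (m+1) mod int n = u (m+1)\<close>
    by (metis add.commute add_diff_cancel_left' diff_0 mod_diff_left_eq)
  then show "vertex_of n m x j = u j"
    using assms unfolding vertex_of_def is_lift_def dyoke_vert_def by auto
qed

lemma dyoke_vert_obtain_lift:
  assumes "dyoke_vert n m u"
  obtains x where "is_lift n m u x"
proof
  have "(\<Sum>j\<in>{1..i}. u j) - (\<Sum>j\<in>{1..i - 1}. u j) = u i" if "1 \<le> i" for i
    using that by (cases i) auto
  then show "is_lift n m u (\<lambda>i. u 0 + (\<Sum>j\<in>{1..i}. u j))"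
    using assms by (auto simp: is_lift_def dyoke_vert_def)
qed

lemma is_lift_vertex_of_imp_shift:
  assumes "is_lift n m (vertex_of n m z) x"
  obtains d where "int n dvd d" "\<forall>i\<le>m. x i = z i - d"
proof
  have "x i = z i - (z 0 - x 0)" if "i \<le> m" for i
    using that
  proof (induction i)
    case (Suc i)
    then have "x (Suc i) - x i = z (Suc i) - z i"
      using assms unfolding is_lift_def by (auto simp: vertex_of_def dest: bspec[of _ _ "Suc i"])
    then show ?case using Suc by simp
  qed simp
  then show "\<forall>i\<le>m. x i = z i - (z 0 - x 0)" by blast
  show "int n dvd z 0 - x 0"
    using assms by (simp add: is_lift_def vertex_of_def mod_eq_dvd_iff dvd_diff_commute)
qed

section \<open>Distance to 0 as least cost of a lift\<close>

lemma lift_cost_upd: "i \<le> m \<Longrightarrow> lift_cost m (x(i := w)) = lift_cost m x - \<bar>x i\<bar> + \<bar>w\<bar>"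
  unfolding lift_cost_def by (simp add: sum.remove[of "{..m}" i])

lemma dyoke_adj_vertex_of_step:
  assumes "0 < n" "lipschitz_upto m x" "lipschitz_upto m (x(i := x i + s))" "i \<le> m"
    and "s = 1 \<or> s = -1"
  shows "dyoke_adj n m (vertex_of n m x) (vertex_of n m (x(i := x i + s)))"
proof -
  let ?y = "x(i := x i + s)"
  have same: "\<forall>j\<le>m+1. j \<noteq> i \<and> j \<noteq> i+1 \<longrightarrow> vertex_of n m x j = vertex_of n m ?y j"
    by (auto simp: vertex_of_def)
  have "coord_eq n m i (vertex_of n m x i) (vertex_of n m ?y i - s)"
  proof (cases "i = 0")
    case True
    have "(x 0 mod int n) mod int n = ((x 0 + s) mod int n - s) mod int n"
      by (simp add: mod_simps)
    then show ?thesis using True by (simp add: coord_eq_def vertex_of_def)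
  qed (use assms(4) in \<open>auto simp: coord_eq_def vertex_of_def\<close>)
  moreover have "coord_eq n m (i+1) (vertex_of n m x (i+1)) (vertex_of n m ?y (i+1) + s)"
  proof (cases "i = m")
    case True
    have "((- x m) mod int n) mod int n = ((- (x m + s)) mod int n + s) mod int n"
      by (simp add: mod_simps)
    then show ?thesis using True by (simp add: coord_eq_def vertex_of_def)
  qed (use assms(4) in \<open>simp add: coord_eq_def vertex_of_def\<close>)
  ultimately show ?thesis
    unfolding dyoke_adj_def
    using dyoke_vert_vertex_of[OF assms(1,2)] dyoke_vert_vertex_of[OF assms(1,3)] assms(4,5) same
    by auto
qed

lemma dyoke_adj_obtain_lift:
  assumes "dyoke_adj n m u v" "is_lift n m v y"
  obtains x where "is_lift n m u x" "lift_cost m x \<le> lift_cost m y + 1"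
proof -
  obtain i s where i: "i \<le> m" and s: "s = 1 \<or> s = -1"
    and same: "\<forall>j\<le>m+1. j \<noteq> i \<and> j \<noteq> i+1 \<longrightarrow> u j = v j"
    and c1: "coord_eq n m i (u i) (v i + s)" and c2: "coord_eq n m (i+1) (u (i+1)) (v (i+1) - s)"
  proof -
    from assms(1) obtain i where "i \<le> m" "\<forall>j\<le>m+1. j \<noteq> i \<and> j \<noteq> i+1 \<longrightarrow> u j = v j"
      and "(coord_eq n m i (u i) (v i + 1) \<and> coord_eq n m (i+1) (u (i+1)) (v (i+1) - 1)) \<or>
           (coord_eq n m i (u i) (v i - 1) \<and> coord_eq n m (i+1) (u (i+1)) (v (i+1) + 1))"
      unfolding dyoke_adj_def by blast
    then show thesis
      using that[of i 1] that[of i "-1"] by auto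
  qed
  define x where "x = y(i := y i + s)"
  have "x 0 mod int n = u 0"
  proof (cases "i = 0")
    case True
    then have "u 0 mod int n = (y 0 mod int n + s) mod int n"
      using c1 assms(2) by (simp add: coord_eq_def is_lift_def)
    moreover have "u 0 mod int n = u 0"
      using assms(1) by (auto simp: dyoke_adj_def dyoke_vert_def)
    ultimately show ?thesis using True by (simp add: x_def mod_simps)
  qed (use same assms(2) in \<open>auto simp: x_def is_lift_def\<close>)
  moreover have "x j - x (j - 1) = u j" if j: "j \<in> {1..m}" for j
  proof -
    have "y j - y (j - 1) = v j" using assms(2) j by (simp add: is_lift_def)
    then show ?thesis
      using c1 c2 same i j by (cases "j = i \<or> j = i + 1") (auto simp: x_def coord_eq_def)
  qed
  ultimately have "is_lift n m u x" by (simp add: is_lift_def)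
  moreover have "lift_cost m x \<le> lift_cost m y + 1"
    using lift_cost_upd[OF i, of y "y i + s"] s by (auto simp: x_def)
  ultimately show thesis by (rule that)
qed

lemma relpowp_dyoke_adj_obtain_lift:
  "(dyoke_adj n m ^^ k) u v \<Longrightarrow> is_lift n m v y \<Longrightarrow>
    \<exists>x. is_lift n m u x \<and> lift_cost m x \<le> lift_cost m y + int k"
proof (induction k arbitrary: v y)
  case (Suc k)
  obtain w where w: "(dyoke_adj n m ^^ k) u w" "dyoke_adj n m w v"
    using Suc.prems(1) by (auto elim: relpowp_Suc_E)
  obtain x' where "is_lift n m w x'" "lift_cost m x' \<le> lift_cost m y + 1"
    using dyoke_adj_obtain_lift[OF w(2) Suc.prems(2)] by blast
  with Suc.IH[OF w(1)] show ?case by fastforce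
qed auto

text \<open>Walking to 0: lower a maximal positive value or raise a minimal negative one;
  this keeps the lift 1-Lipschitz and decreases its cost by one.\<close>

lemma lipschitz_upto_exists_descent:
  assumes "lipschitz_upto m x" "lift_cost m x \<noteq> 0"
  obtains i s where "i \<le> m" "s = 1 \<or> s = -1" "lipschitz_upto m (x(i := x i + s))"
    "lift_cost m (x(i := x i + s)) = lift_cost m x - 1"
proof -
  have fin: "finite (x ` {..m})" "x ` {..m} \<noteq> {}" by auto
  show thesis
  proof (cases "\<exists>i\<le>m. x i > 0")
    case True
    obtain i where i: "i \<le> m" "x i = Max (x ` {..m})"
      by (metis Max_in[OF fin] atMost_iff imageE)
    then have ge: "x j \<le> x i" if "j \<le> m" for j using that fin by auto
    then have "x i > 0" using True by force
    moreover have "lipschitz_upto m (x(i := x i + -1))"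
      using assms(1) ge unfolding lipschitz_upto_def by (auto simp: abs_le_iff)
    ultimately show thesis using that[of i "-1"] i lift_cost_upd[OF i(1)] by simp
  next
    case False
    obtain i0 where "i0 \<le> m" "x i0 \<noteq> 0"
      using assms(2) unfolding lift_cost_def by (auto simp: sum_nonneg_eq_0_iff)
    obtain i where i: "i \<le> m" "x i = Min (x ` {..m})"
      by (metis Min_in[OF fin] atMost_iff imageE)
    then have le: "x i \<le> x j" if "j \<le> m" for j using that fin by auto
    then have "x i < 0" using False \<open>i0 \<le> m\<close> \<open>x i0 \<noteq> 0\<close> by force
    moreover have "lipschitz_upto m (x(i := x i + 1))"
      using assms(1) le unfolding lipschitz_upto_def by (auto simp: abs_le_iff)
    ultimately show thesis using that[of i 1] i lift_cost_upd[OF i(1)] by simp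
  qed
qed

lemma relpowp_dyoke_adj_vertex_of_zero:
  assumes "0 < n" "lipschitz_upto m x"
  shows "(dyoke_adj n m ^^ nat (lift_cost m x)) (vertex_of n m x) dyoke_zero"
  using assms(2)
proof (induction "nat (lift_cost m x)" arbitrary: x)
  case 0
  moreover have "0 \<le> lift_cost m x" by (simp add: lift_cost_def sum_nonneg)
  ultimately have "(\<Sum>i\<le>m. \<bar>x i\<bar>) = 0" unfolding lift_cost_def by simp
  then have "\<forall>i\<le>m. x i = 0" by (subst (asm) sum_nonneg_eq_0_iff) auto
  then have "vertex_of n m x = dyoke_zero" by (auto simp: vertex_of_def dyoke_zero_def)
  then show ?case by (simp flip: 0(1))
next
  case (Suc k)
  then have "lift_cost m x \<noteq> 0" by auto
  then obtain i s where i: "i \<le> m" and s: "s = 1 \<or> s = -1" and L: "lipschitz_upto m (x(i := x i + s))"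
    and c: "lift_cost m (x(i := x i + s)) = lift_cost m x - 1"
    using lipschitz_upto_exists_descent[OF Suc.prems] by blast
  from c Suc.hyps(2) have k: "nat (lift_cost m (x(i := x i + s))) = k" by simp
  have "(dyoke_adj n m ^^ k) (vertex_of n m (x(i := x i + s))) dyoke_zero"
    using Suc.hyps(1)[OF k[symmetric] L] by (simp only: k)
  with dyoke_adj_vertex_of_step[OF assms(1) Suc.prems L i s] show ?case
    unfolding Suc.hyps(2)[symmetric] by (rule relpowp_Suc_I2)
qed

lemma dyoke_dist_vertex_of_le:
  assumes "0 < n" "lipschitz_upto m z" "int n dvd d"
  shows "dyoke_dist n m (vertex_of n m z) dyoke_zero \<le> enat (nat (lift_cost m (\<lambda>i. z i - d)))"
proof -
  have "vertex_of n m (\<lambda>i. z i - d) = vertex_of n m z"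
    by (rule vertex_of_is_lift[OF dyoke_vert_vertex_of[OF assms(1,2)]
          is_lift_shift[OF is_lift_vertex_of assms(3)]])
  moreover have "lipschitz_upto m (\<lambda>i. z i - d)"
    using assms(2) by (simp add: lipschitz_upto_def)
  ultimately have "(dyoke_adj n m ^^ nat (lift_cost m (\<lambda>i. z i - d))) (vertex_of n m z) dyoke_zero"
    using relpowp_dyoke_adj_vertex_of_zero[OF assms(1)] by metis
  then show ?thesis
    unfolding dyoke_dist_def by (auto intro: INF_lower2)
qed

lemma dyoke_dist_vertex_of_ge:
  assumes "0 < n" "lipschitz_upto m z"
  obtains d where "int n dvd d"
    "enat (nat (lift_cost m (\<lambda>i. z i - d))) \<le> dyoke_dist n m (vertex_of n m z) dyoke_zero"
proof -
  define k0 where "k0 = (LEAST k. (dyoke_adj n m ^^ k) (vertex_of n m z) dyoke_zero)"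
  have "(dyoke_adj n m ^^ k0) (vertex_of n m z) dyoke_zero"
    unfolding k0_def by (rule LeastI_ex) (use relpowp_dyoke_adj_vertex_of_zero[OF assms] in blast)
  moreover have "is_lift n m dyoke_zero (\<lambda>_. 0)"
    by (simp add: is_lift_def dyoke_zero_def)
  ultimately have "\<exists>x. is_lift n m (vertex_of n m z) x \<and> lift_cost m x \<le> lift_cost m (\<lambda>_. 0) + int k0"
    by (rule relpowp_dyoke_adj_obtain_lift)
  then obtain x where x: "is_lift n m (vertex_of n m z) x" "lift_cost m x \<le> int k0"
    by (auto simp: lift_cost_def)
  obtain d where d: "int n dvd d" "\<forall>i\<le>m. x i = z i - d"
    using is_lift_vertex_of_imp_shift[OF x(1)] .
  have "lift_cost m x = lift_cost m (\<lambda>i. z i - d)"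
    unfolding lift_cost_def using d(2) by simp
  moreover have "enat k0 \<le> dyoke_dist n m (vertex_of n m z) dyoke_zero"
    unfolding dyoke_dist_def by (rule INF_greatest) (auto simp: k0_def intro: Least_le)
  ultimately show thesis
    using that[OF d(1)] x(2) by (simp add: order.trans[rotated])
qed

lemma dyoke_vert_obtain_vertex_of:
  assumes "dyoke_vert n m u"
  obtains x where "lipschitz_upto m x" "u = vertex_of n m x"
  by (metis assms dyoke_vert_obtain_lift is_lift_lipschitz_upto vertex_of_is_lift)

section \<open>Sums of absolute deviations\<close>

definition abs_dev_sum :: "nat \<Rightarrow> int \<Rightarrow> int" where
  "abs_dev_sum M c = (\<Sum>i\<le>M. \<bar>int i - c\<bar>)"

lemma abs_dev_sum_Suc: "abs_dev_sum (Suc M) c = abs_dev_sum M c + \<bar>int M + 1 - c\<bar>"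
  by (simp add: abs_dev_sum_def)

lemma abs_dev_sum_closed_form:
  assumes "-1 \<le> c" "c \<le> int M + 1"
  shows "2 * abs_dev_sum M c = int M * (int M + 1) + 2 * c * c - 2 * c * int M"
proof -
  have "(\<forall>c. -1 \<le> c \<and> c \<le> int M + 1 \<longrightarrow>
            2 * abs_dev_sum M c = int M * (int M + 1) + 2 * c * c - 2 * c * int M) \<and>
        (\<forall>c. int M \<le> c \<longrightarrow> 2 * abs_dev_sum M c = (int M + 1) * (2 * c - int M))"
  proof (induction M)
    case 0
    have "2 * \<bar>c\<bar> = 2 * c * c" if "-1 \<le> c" "c \<le> 1" for c :: int
    proof -
      have "c = -1 \<or> c = 0 \<or> c = 1" using that by linarith
      then show ?thesis by auto
    qed
    then show ?case by (auto simp: abs_dev_sum_def)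
  next
    case (Suc M)
    have mid: "2 * abs_dev_sum M c = int M * (int M + 1) + 2 * c * c - 2 * c * int M"
      if "-1 \<le> c" "c \<le> int M + 1" for c
      using Suc.IH that by blast
    have hi: "2 * abs_dev_sum M c = (int M + 1) * (2 * c - int M)" if "int M \<le> c" for c
      using Suc.IH that by blast
    show ?case
    proof (intro conjI allI impI)
      fix c assume c: "-1 \<le> c \<and> c \<le> int (Suc M) + 1"
      show "2 * abs_dev_sum (Suc M) c
          = int (Suc M) * (int (Suc M) + 1) + 2 * c * c - 2 * c * int (Suc M)"
      proof (cases "c \<le> int M + 1")
        case True
        then show ?thesis using mid[of c] c by (simp add: abs_dev_sum_Suc algebra_simps)
      next
        case False
        then have "c = int M + 2" using c by simp
        then show ?thesis using hi[of c] by (simp add: abs_dev_sum_Suc algebra_simps)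
      qed
    next
      fix c assume "int (Suc M) \<le> c"
      then show "2 * abs_dev_sum (Suc M) c = (int (Suc M) + 1) * (2 * c - int (Suc M))"
        using hi[of c] by (simp add: abs_dev_sum_Suc algebra_simps)
    qed
  qed
  then show ?thesis using assms by blast
qed

lemma abs_dev_sum_reflect: "abs_dev_sum M (int M - c) = abs_dev_sum M c"
  unfolding abs_dev_sum_def using sum_diff_split[of 0 M "\<lambda>i. \<bar>int i - c\<bar>"]
  by (simp add: of_nat_diff abs_minus_commute algebra_simps)

lemma abs_dev_sum_succ_diff:
  "abs_dev_sum M (c + 1) - abs_dev_sum M c = 2 * max 0 (min (c + 1) (int M + 1)) - (int M + 1)"
proof (induction M)
  case (Suc M)
  have "abs_dev_sum (Suc M) (c + 1) - abs_dev_sum (Suc M) c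
      = (abs_dev_sum M (c + 1) - abs_dev_sum M c) + (\<bar>int M - c\<bar> - \<bar>int M + 1 - c\<bar>)"
    by (simp add: abs_dev_sum_Suc)
  also have "\<dots> = 2 * max 0 (min (c + 1) (int M + 1)) - (int M + 1) + (\<bar>int M - c\<bar> - \<bar>int M + 1 - c\<bar>)"
    using Suc.IH by simp
  finally show ?case by (simp add: max_def min_def abs_if)
qed (auto simp: abs_dev_sum_def max_def min_def)

lemma abs_dev_sum_mono_right:
  assumes "int M \<le> 2 * c" "c \<le> c'"
  shows "abs_dev_sum M c \<le> abs_dev_sum M c'"
proof -
  have "abs_dev_sum M c \<le> abs_dev_sum M (c + int k)" for k
  proof (induction k)
    case (Suc k)
    have "0 \<le> abs_dev_sum M (c + int k + 1) - abs_dev_sum M (c + int k)"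
      unfolding abs_dev_sum_succ_diff using assms(1) by (auto simp: max_def min_def)
    with Suc.IH show ?case by (simp add: add.assoc add.commute[of 1])
  qed simp
  from this[of "nat (c' - c)"] show ?thesis using assms(2) by simp
qed

text \<open>The sum is convex in \<open>c\<close> and symmetric about \<open>M / 2\<close>.\<close>

lemma abs_dev_sum_mono:
  assumes "\<bar>2 * c - int M\<bar> \<le> \<bar>2 * c' - int M\<bar>"
  shows "abs_dev_sum M c \<le> abs_dev_sum M c'"
proof -
  define fold where "fold t = (if int M \<le> 2 * t then t else int M - t)" for t
  have "abs_dev_sum M t = abs_dev_sum M (fold t)" for t
    by (simp add: fold_def abs_dev_sum_reflect)
  moreover have "abs_dev_sum M (fold c) \<le> abs_dev_sum M (fold c')"
    by (rule abs_dev_sum_mono_right) (use assms in \<open>auto simp: fold_def abs_if\<close>)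
  ultimately show ?thesis by simp
qed

lemma abs_dev_sum_eq_choose:
  assumes "c \<le> M"
  shows "abs_dev_sum M (int c) = int ((c + 1 choose 2) + (M - c + 1 choose 2))"
proof -
  have "2 * (k + 1 choose 2) = k * (k + 1)" for k
    by (induction k) (simp_all add: numeral_2_eq_2)
  then have "2 * int (k + 1 choose 2) = int k * (int k + 1)" for k
    by (metis of_nat_1 of_nat_add of_nat_mult of_nat_numeral)
  from this[of c] this[of "M - c"]
  have "2 * int (c + 1 choose 2) = int c * (int c + 1)"
    "2 * int (M - c + 1 choose 2) = int (M - c) * (int (M - c) + 1)" .
  moreover have "2 * abs_dev_sum M (int c) = int c * (int c + 1) + int (M - c) * (int (M - c) + 1)"
    using assms abs_dev_sum_closed_form[of "int c" M] by (simp add: of_nat_diff algebra_simps)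
  ultimately show ?thesis
    unfolding of_nat_add by linarith
qed

section \<open>Cheap shifts of a lift\<close>

lemma lift_cost_shift_le_abs_dev_sum:
  assumes "lipschitz_upto m x" "k \<le> m"
  shows "lift_cost m (\<lambda>i. x i - x k) \<le> abs_dev_sum m (int k)"
  unfolding lift_cost_def abs_dev_sum_def
  by (rule sum_mono) (use lipschitz_upto_abs_diff_le[OF assms(1)] assms(2) in auto)

lemma zdiv_add1_eq_of_not_dvd:
  fixes a n :: int
  assumes "0 < n" "\<not> n dvd a + 1"
  shows "(a + 1) div n = a div n"
proof -
  have r: "0 < (a + 1) mod n"
    using assms pos_mod_sign[OF assms(1), of "a + 1"] by (simp add: dvd_eq_mod_eq_0 less_le)
  have q: "a = n * ((a + 1) div n) + ((a + 1) mod n - 1)"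
    using mult_div_mod_eq[of n "a + 1"] by linarith
  have "a div n = (a + 1) div n"
    using r pos_mod_bound[OF assms(1), of "a + 1"] by (intro int_div_pos_eq[OF q]) simp_all
  then show ?thesis ..
qed

lemma lipschitz_upto_window_between:
  assumes "0 < n" "lipschitz_upto m x" "E \<le> m" "\<forall>k\<in>{Q..E}. \<not> int n dvd x k"
    and "Q \<le> k" "k \<le> E"
  shows "x Q div int n * int n < x k \<and> x k < x Q div int n * int n + int n"
proof -
  have "x k div int n = x Q div int n"
    using assms(5,6)
  proof (induction k)
    case (Suc k)
    show ?case
    proof (cases "Q = Suc k")
      case False
      then have k: "Q \<le> k" "k \<le> E" using Suc.prems by auto
      have "\<bar>x (Suc k) - x k\<bar> \<le> 1"
        using assms(2,3) Suc.prems unfolding lipschitz_upto_def by force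
      moreover have "\<not> int n dvd x k" "\<not> int n dvd x (Suc k)"
        using assms(4) k Suc.prems by auto
      moreover have "x (Suc k) = x k + 1 \<or> x (Suc k) = x k \<or> x k = x (Suc k) + 1"
        using \<open>\<bar>x (Suc k) - x k\<bar> \<le> 1\<close> by arith
      ultimately have "x (Suc k) div int n = x k div int n"
        using zdiv_add1_eq_of_not_dvd[of "int n" "x k"] zdiv_add1_eq_of_not_dvd[of "int n" "x (Suc k)"]
          assms(1) by (elim disjE) simp_all
      with Suc.IH k show ?thesis by simp
    qed simp
  qed simp
  moreover have "0 \<le> x k mod int n" "x k mod int n \<noteq> 0" "x k mod int n < int n"
    using assms(1,4-6) by (simp_all add: dvd_eq_mod_eq_0)
  ultimately show ?thesis
    using div_mult_mod_eq[of "x k" "int n"] by simp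
qed

lemma abs_sum_two_le:
  fixes a y n z d :: int
  assumes "a \<le> y" "y \<le> a + n" "\<bar>z - y\<bar> \<le> d"
  shows "\<bar>z - a\<bar> + \<bar>z - (a + n)\<bar> \<le> n + 2 * d"
  using assms by arith

lemma lift_cost_pair_le:
  assumes "0 < n" "lipschitz_upto m x" "2 * Q \<le> m" "\<forall>k\<in>{Q..m - Q}. \<not> int n dvd x k"
  obtains a where "int n dvd a"
    "lift_cost m (\<lambda>i. x i - a) + lift_cost m (\<lambda>i. x i - (a + int n))
       \<le> int n * (int m + 1) + 2 * int Q * (int Q - 1)"
proof -
  define a where "a = x Q div int n * int n"
  have inside: "a < x k \<and> x k < a + int n" if "Q \<le> k" "k \<le> m - Q" for k
    unfolding a_def using lipschitz_upto_window_between[OF assms(1,2) _ assms(4) that] by simp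
  have near: "\<bar>x j - x i\<bar> \<le> \<bar>int j - int i\<bar>" if "i \<le> m" "j \<le> m" for i j
    using lipschitz_upto_abs_diff_le[OF assms(2) that] .
  define K where "K = int m - 2 * int Q + 2"
  have pointwise: "\<bar>x i - a\<bar> + \<bar>x i - (a + int n)\<bar>
      \<le> int n - K + (\<bar>int i - (int Q - 1)\<bar> + \<bar>int i - (int m - int Q + 1)\<bar>)"
    if "i \<le> m" for i
  proof -
    consider "Q \<le> i \<and> i \<le> m - Q" | "i < Q" | "m - Q < i" by linarith
    then show ?thesis
    proof cases
      case 1
      then show ?thesis using inside[of i] assms(3) by (auto simp: K_def abs_if)
    next
      case 2
      have "a < x Q \<and> x Q < a + int n" "\<bar>x (Q - 1) - x Q\<bar> \<le> 1"
        using inside[of Q] near[of Q "Q - 1"] 2 assms(3) by (auto simp: of_nat_diff)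
      then have "a \<le> x (Q - 1) \<and> x (Q - 1) \<le> a + int n" by arith
      moreover have "\<bar>x i - x (Q - 1)\<bar> \<le> int Q - 1 - int i"
        using near[of "Q - 1" i] 2 assms(3) by auto
      ultimately have "\<bar>x i - a\<bar> + \<bar>x i - (a + int n)\<bar> \<le> int n + 2 * (int Q - 1 - int i)"
        by (intro abs_sum_two_le[of _ "x (Q - 1)"]) auto
      then show ?thesis using 2 assms(3) by (simp add: K_def)
    next
      case 3
      have "a < x (m - Q) \<and> x (m - Q) < a + int n" "\<bar>x (m - Q + 1) - x (m - Q)\<bar> \<le> 1"
        using inside[of "m - Q"] near[of "m - Q" "m - Q + 1"] 3 that assms(3) by auto
      then have "a \<le> x (m - Q + 1) \<and> x (m - Q + 1) \<le> a + int n" by arith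
      moreover have "\<bar>x i - x (m - Q + 1)\<bar> \<le> int i - (int m - int Q + 1)"
        using near[of "m - Q + 1" i] 3 that by auto
      ultimately have "\<bar>x i - a\<bar> + \<bar>x i - (a + int n)\<bar> \<le> int n + 2 * (int i - (int m - int Q + 1))"
        by (intro abs_sum_two_le[of _ "x (m - Q + 1)"]) auto
      then show ?thesis using 3 assms(3) by (simp add: K_def)
    qed
  qed
  have "lift_cost m (\<lambda>i. x i - a) + lift_cost m (\<lambda>i. x i - (a + int n))
      = (\<Sum>i\<le>m. \<bar>x i - a\<bar> + \<bar>x i - (a + int n)\<bar>)"
    by (simp add: lift_cost_def sum.distrib)
  also have "\<dots> \<le> (\<Sum>i\<le>m. int n - K + (\<bar>int i - (int Q - 1)\<bar> + \<bar>int i - (int m - int Q + 1)\<bar>))"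
    by (rule sum_mono) (use pointwise in auto)
  also have "\<dots> = (int m + 1) * (int n - K) + abs_dev_sum m (int Q - 1) + abs_dev_sum m (int m - int Q + 1)"
    by (simp only: sum.distrib add.assoc) (simp add: abs_dev_sum_def)
  also have "abs_dev_sum m (int m - int Q + 1) = abs_dev_sum m (int Q - 1)"
    using abs_dev_sum_reflect[of m "int Q - 1"] by (simp add: algebra_simps)
  also have "(int m + 1) * (int n - K) + abs_dev_sum m (int Q - 1) + abs_dev_sum m (int Q - 1)
      = int n * (int m + 1) + 2 * int Q * (int Q - 1)"
    using abs_dev_sum_closed_form[of "int Q - 1" m] assms(3) by (simp add: K_def algebra_simps)
  finally show thesis
    by (rule that[rotated]) (simp add: a_def)
qed

lemma dyoke_dist_vertex_of_ramp:
  assumes "0 < n" "\<bar>2 * c - int m\<bar> \<le> int n"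
  shows "dyoke_dist n m (vertex_of n m (\<lambda>i. int i - c)) dyoke_zero = enat (nat (abs_dev_sum m c))"
proof (rule antisym)
  have lip: "lipschitz_upto m (\<lambda>i. int i - c)" by (simp add: lipschitz_upto_def)
  show "dyoke_dist n m (vertex_of n m (\<lambda>i. int i - c)) dyoke_zero \<le> enat (nat (abs_dev_sum m c))"
    using dyoke_dist_vertex_of_le[OF assms(1) lip, of 0] by (simp add: lift_cost_def abs_dev_sum_def)
  obtain d where d: "int n dvd d"
    and le: "enat (nat (lift_cost m (\<lambda>i. int i - c - d))) \<le> dyoke_dist n m (vertex_of n m (\<lambda>i. int i - c)) dyoke_zero"
    using dyoke_dist_vertex_of_ge[OF assms(1) lip] .
  have "abs_dev_sum m c \<le> abs_dev_sum m (c + d)"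
  proof (rule abs_dev_sum_mono)
    show "\<bar>2 * c - int m\<bar> \<le> \<bar>2 * (c + d) - int m\<bar>"
      using dvd_imp_le_int[OF _ d] assms(2) by (cases "d = 0") auto
  qed
  moreover have "lift_cost m (\<lambda>i. int i - c - d) = abs_dev_sum m (c + d)"
    by (simp add: lift_cost_def abs_dev_sum_def algebra_simps)
  ultimately show "enat (nat (abs_dev_sum m c)) \<le> dyoke_dist n m (vertex_of n m (\<lambda>i. int i - c)) dyoke_zero"
    using le by (simp add: order.trans[rotated])
qed

lemma minus_mod_add_left_eq: "(- (a mod n + b)) mod n = (- (a + b)) mod (n :: int)"
  by (metis mod_add_left_eq mod_minus_eq)

lemma u0_eq_vertex_of:
  assumes "n \<le> m"
  shows "u0 n m = vertex_of n m (\<lambda>i. int i - int ((m + n) div 2))"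
proof
  fix j
  have c: "int ((m + n) div 2) = int ((m - n) div 2) + int n"
    using assms by presburger
  have "(- ((- int ((m - n) div 2)) mod int n + int m)) mod int n
      = (- (- int ((m - n) div 2) + int m)) mod int n"
    by (rule minus_mod_add_left_eq)
  also have "\<dots> = (- (int m - int ((m + n) div 2))) mod int n"
    unfolding c by (simp add: mod_eq_dvd_iff)
  finally have "(- ((- int ((m - n) div 2)) mod int n + int m)) mod int n
      = (- (int m - int ((m + n) div 2))) mod int n" .
  then show "u0 n m j = vertex_of n m (\<lambda>i. int i - int ((m + n) div 2)) j"
    unfolding u0_def vertex_of_def Let_def c by (auto simp: mod_simps)
qed

lemma dyoke_dist_u0:
  assumes "0 < n" "n \<le> m"
  shows "dyoke_dist n m (u0 n m) dyoke_zero = enat (nat (abs_dev_sum m (int ((m + n) div 2))))"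
  unfolding u0_eq_vertex_of[OF assms(2)]
  by (rule dyoke_dist_vertex_of_ramp) (use assms in presburger)+

lemma dyoke_vert_u0:
  assumes "0 < n" "n \<le> m"
  shows "dyoke_vert n m (u0 n m)"
  unfolding u0_eq_vertex_of[OF assms(2)]
  by (rule dyoke_vert_vertex_of[OF assms(1)]) (simp add: lipschitz_upto_def)

lemma abs_dev_sum_repeat:
  assumes "1 \<le> q" "q \<le> m"
  shows "(\<Sum>i\<le>m. \<bar>int i - (if q \<le> i then 1 else 0) - c\<bar>) = abs_dev_sum (m - 1) c + \<bar>int q - 1 - c\<bar>"
  using assms(2)
proof (induction m rule: dec_induct)
  case base
  have "(\<Sum>i<q. \<bar>int i - (if q \<le> i then 1 else 0) - c\<bar>) = abs_dev_sum (q - 1) c"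
    unfolding abs_dev_sum_def using assms(1) by (simp add: lessThan_Suc_atMost[symmetric])
  then show ?case
    by (simp add: lessThan_Suc_atMost[symmetric] of_nat_diff assms(1))
next
  case (step m)
  then show ?case
    using abs_dev_sum_Suc[of "m - 1" c] assms(1) by (simp add: of_nat_diff)
qed

lemma u1_eq_vertex_of:
  assumes "0 < n" "n \<le> m"
  shows "u1 n m = vertex_of n m
    (\<lambda>i. int i - int ((m - n) div 2) - (if (m + 2) div 2 \<le> i then 1 else 0))"
proof
  fix j
  let ?p = "int ((m - n) div 2)"
  have "(- ((- ?p) mod int n + int m - 1)) mod int n = (- (- ?p + int m - 1)) mod int n"
    using minus_mod_add_left_eq[of "- ?p" "int n" "int m - 1"] by (simp add: algebra_simps)
  then show "u1 n m j = vertex_of n m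
      (\<lambda>i. int i - int ((m - n) div 2) - (if (m + 2) div 2 \<le> i then 1 else 0)) j"
    using assms unfolding u1_def vertex_of_def Let_def by auto
qed

lemma dyoke_vert_u1:
  assumes "0 < n" "n \<le> m"
  shows "dyoke_vert n m (u1 n m)"
  unfolding u1_eq_vertex_of[OF assms]
  by (rule dyoke_vert_vertex_of[OF assms(1)]) (auto simp: lipschitz_upto_def)

lemma dyoke_dist_u1_ge:
  assumes "0 < n" "n \<le> m" "odd (m - n)" "(m + 2) div 2 < n"
  shows "dyoke_dist n m (u0 n m) dyoke_zero + enat (n - (m + 2) div 2) \<le> dyoke_dist n m (u1 n m) dyoke_zero"
proof -
  define p where "p = (m - n) div 2"
  define q where "q = (m + 2) div 2"
  define z where "z i = int i - int p - (if q \<le> i then 1 else 0)" for i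
  have m: "m = n + 2 * p + 1" and c0: "(m + n) div 2 = p + n" and q: "2 * q = m + 1 \<or> 2 * q = m + 2" and "1 \<le> q" "q \<le> m"
    using assms unfolding p_def q_def by presburger+
  have lip: "lipschitz_upto m z" by (auto simp: lipschitz_upto_def z_def)
  have u1: "u1 n m = vertex_of n m z"
    unfolding z_def p_def q_def by (rule u1_eq_vertex_of[OF assms(1,2)])
  obtain d where d: "int n dvd d"
    and le: "enat (nat (lift_cost m (\<lambda>i. z i - d))) \<le> dyoke_dist n m (vertex_of n m z) dyoke_zero"
    using dyoke_dist_vertex_of_ge[OF assms(1) lip] .
  have dn: "d = 0 \<or> int n \<le> d \<or> d \<le> - int n"
    using dvd_imp_le_int[OF _ d] by (cases "d < 0") auto
  have m1: "int (m - 1) = int n + 2 * int p" and q2: "int n + 2 * int p + 2 \<le> 2 * int q"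
    using m q by auto
  have "lift_cost m (\<lambda>i. z i - d) = abs_dev_sum (m - 1) (int p + d) + \<bar>int q - 1 - (int p + d)\<bar>"
    unfolding lift_cost_def z_def using abs_dev_sum_repeat[OF \<open>1 \<le> q\<close> \<open>q \<le> m\<close>, of "int p + d"]
    by (simp add: algebra_simps)
  moreover have "abs_dev_sum (m - 1) (int p) \<le> abs_dev_sum (m - 1) (int p + d)"
  proof (rule abs_dev_sum_mono)
    have "2 * int p - int (m - 1) = - int n" "2 * (int p + d) - int (m - 1) = 2 * d - int n"
      using m1 by simp_all
    then show "\<bar>2 * int p - int (m - 1)\<bar> \<le> \<bar>2 * (int p + d) - int (m - 1)\<bar>"
      using dn by (auto simp: abs_if)
  qed
  moreover have "int p + 1 + int n - int q \<le> \<bar>int q - 1 - (int p + d)\<bar>"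
    using dn q2 by (auto simp: abs_if)
  moreover have "abs_dev_sum m (int p + int n) = abs_dev_sum (m - 1) (int p) + int p + 1"
  proof -
    have "Suc (m - 1) = m" using m by simp
    then have "abs_dev_sum m (int p + int n) = abs_dev_sum (m - 1) (int p + int n) + (int p + 1)"
      using abs_dev_sum_Suc[of "m - 1" "int p + int n"] m1 by simp
    moreover have "abs_dev_sum (m - 1) (int p + int n) = abs_dev_sum (m - 1) (int p)"
      using abs_dev_sum_reflect[of "m - 1" "int p"] unfolding m1 by (simp add: add.commute)
    ultimately show ?thesis by simp
  qed
  ultimately have "abs_dev_sum m (int p + int n) + int (n - q) \<le> lift_cost m (\<lambda>i. z i - d)"
    using assms(4) unfolding q_def by (simp add: of_nat_diff)
  moreover have "0 \<le> abs_dev_sum m (int p + int n)"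
    by (simp add: abs_dev_sum_def sum_nonneg)
  ultimately have "nat (abs_dev_sum m (int p + int n)) + (n - q) \<le> nat (lift_cost m (\<lambda>i. z i - d))"
    by (simp add: le_nat_iff)
  moreover have "dyoke_dist n m (u0 n m) dyoke_zero = enat (nat (abs_dev_sum m (int p + int n)))"
    using dyoke_dist_u0[OF assms(1,2)] by (simp add: c0)
  ultimately show ?thesis
    using le unfolding u1 q_def by (simp add: order.trans[rotated])
qed

section \<open>The eccentricity of 0\<close>

lemma pair_cost_bound_le:
  assumes "0 < n" "n \<le> m"
  defines "Q \<equiv> (m - n + 1) div 2"
  shows "int n * (int m + 1) + 2 * int Q * (int Q - 1)
    \<le> 2 * (abs_dev_sum m (int ((m + n) div 2)) + int (if odd (m - n) then n - (m + 2) div 2 else 0)) + 1"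
    (is "_ \<le> 2 * (?F + int ?E) + 1")
proof -
  have "2 * Q \<le> m" "(m + n) div 2 = m - Q" using assms unfolding Q_def by presburger+
  then have "int ((m + n) div 2) = int m - int Q" by simp
  then have "?F = abs_dev_sum m (int Q)"
    by (simp only: abs_dev_sum_reflect)
  then have F2: "2 * ?F = int m * (int m + 1) + 2 * int Q * int Q - 2 * int Q * int m"
    using abs_dev_sum_closed_form[of "int Q" m] \<open>2 * Q \<le> m\<close> by simp
  show ?thesis
  proof (cases "even (m - n)")
    case True
    then have "m = n + 2 * Q" using assms(2) unfolding Q_def by presburger
    then show ?thesis using F2 by (simp add: algebra_simps)
  next
    case False
    then have "m + 1 = n + 2 * Q" using assms(2) unfolding Q_def by presburger
    then have n: "int n = int m + 1 - 2 * int Q" by simp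
    have "2 * int n \<le> 2 * int ?E + int m + 2" using False by auto
    then show ?thesis using F2 unfolding n by (simp add: algebra_simps)
  qed
qed

lemma lipschitz_upto_exists_cheap_shift:
  assumes "0 < n" "n \<le> m" "lipschitz_upto m x"
  obtains c where "int n dvd c" "lift_cost m (\<lambda>i. x i - c)
    \<le> abs_dev_sum m (int ((m + n) div 2)) + int (if odd (m - n) then n - (m + 2) div 2 else 0)"
proof -
  let ?F = "abs_dev_sum m (int ((m + n) div 2))"
  let ?E = "if odd (m - n) then n - (m + 2) div 2 else 0"
  define Q where "Q = (m - n + 1) div 2"
  have Q: "2 * Q \<le> m" "(m + n) div 2 = m - Q"
    using assms(1,2) unfolding Q_def by presburger+
  show thesis
  proof (cases "\<exists>k\<in>{Q..m - Q}. int n dvd x k")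
    case True
    then obtain k where k: "Q \<le> k" "k \<le> m - Q" "int n dvd x k" by auto
    have "lift_cost m (\<lambda>i. x i - x k) \<le> abs_dev_sum m (int k)"
      using lift_cost_shift_le_abs_dev_sum[OF assms(3)] k Q by simp
    also have "\<dots> \<le> ?F"
      unfolding Q(2) by (rule abs_dev_sum_mono) (use k Q in auto)
    finally show thesis using that[OF k(3)] by simp
  next
    case False
    then obtain a where a: "int n dvd a"
      "lift_cost m (\<lambda>i. x i - a) + lift_cost m (\<lambda>i. x i - (a + int n))
         \<le> int n * (int m + 1) + 2 * int Q * (int Q - 1)"
      using lift_cost_pair_le[OF assms(1,3) Q(1)] by blast
    with pair_cost_bound_le[OF assms(1,2)]
    have "lift_cost m (\<lambda>i. x i - a) + lift_cost m (\<lambda>i. x i - (a + int n)) \<le> 2 * (?F + int ?E) + 1"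
      unfolding Q_def by linarith
    moreover have "u \<le> T \<or> w \<le> T" if "u + w \<le> 2 * T + 1" for u w T :: int
      using that by linarith
    moreover have "int n dvd a + int n" using a(1) by simp
    ultimately show thesis using that a(1) by blast
  qed
qed

lemma dyoke_dist_le:
  assumes "0 < n" "n \<le> m" "dyoke_vert n m v"
  shows "dyoke_dist n m v dyoke_zero
    \<le> dyoke_dist n m (u0 n m) dyoke_zero + enat (if odd (m - n) then n - (m + 2) div 2 else 0)"
    (is "_ \<le> _ + enat ?E")
proof -
  let ?F = "abs_dev_sum m (int ((m + n) div 2))"
  obtain x where lip: "lipschitz_upto m x" and v: "v = vertex_of n m x"
    using dyoke_vert_obtain_vertex_of[OF assms(3)] .
  obtain c where c: "int n dvd c" "lift_cost m (\<lambda>i. x i - c) \<le> ?F + int ?E"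
    using lipschitz_upto_exists_cheap_shift[OF assms(1,2) lip] .
  have "0 \<le> ?F" by (simp add: abs_dev_sum_def sum_nonneg)
  with c(2) have "enat (nat (lift_cost m (\<lambda>i. x i - c))) \<le> enat (nat ?F + ?E)"
    by (simp add: nat_le_iff)
  with dyoke_dist_vertex_of_le[OF assms(1) lip c(1)]
  have "dyoke_dist n m v dyoke_zero \<le> enat (nat ?F + ?E)"
    unfolding v by (rule order.trans)
  then show ?thesis
    using dyoke_dist_u0[OF assms(1,2)] by simp
qed

lemma dyoke_ecc0_eqI:
  assumes "dyoke_vert n m u" "\<And>v. dyoke_vert n m v \<Longrightarrow> dyoke_dist n m v dyoke_zero \<le> dyoke_dist n m u dyoke_zero"
  shows "dyoke_ecc0 n m = dyoke_dist n m u dyoke_zero"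
  unfolding dyoke_ecc0_def using assms by (intro antisym SUP_least SUP_upper2) auto

theorem theorem5p31:
  fixes n m :: nat
  assumes "1 < n" and "n \<le> m"
  shows "(even (m - n) \<or> n \<le> (m + 2) div 2 \<longrightarrow>
           dyoke_ecc0 n m = dyoke_dist n m (u0 n m) dyoke_zero \<and>
           dyoke_dist n m (u0 n m) dyoke_zero =
             enat ((((m + n) div 2 + 1) choose 2) + (((m - n + 1) div 2 + 1) choose 2)))
       \<and> (\<not> (even (m - n) \<or> n \<le> (m + 2) div 2) \<longrightarrow>
           dyoke_ecc0 n m = dyoke_dist n m (u1 n m) dyoke_zero \<and>
           dyoke_dist n m (u1 n m) dyoke_zero =
             dyoke_dist n m (u0 n m) dyoke_zero + enat (n - (m + 2) div 2))"
proof -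
  have n: "0 < n" using assms(1) by simp
  let ?d0 = "dyoke_dist n m (u0 n m) dyoke_zero"
  let ?d1 = "dyoke_dist n m (u1 n m) dyoke_zero"
  let ?E = "if odd (m - n) then n - (m + 2) div 2 else 0"
  have upper: "dyoke_dist n m v dyoke_zero \<le> ?d0 + enat ?E" if "dyoke_vert n m v" for v
    using dyoke_dist_le[OF n assms(2) that] .
  show ?thesis
  proof (intro conjI impI)
    assume "even (m - n) \<or> n \<le> (m + 2) div 2"
    then have "?E = 0" by auto
    then show "dyoke_ecc0 n m = ?d0"
      using upper by (intro dyoke_ecc0_eqI[OF dyoke_vert_u0[OF n assms(2)]]) (simp add: zero_enat_def[symmetric])
    have c: "(m + n) div 2 \<le> m" "m - (m + n) div 2 = (m - n + 1) div 2"
      using assms(2) by presburger+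
    show "?d0 = enat ((((m + n) div 2 + 1) choose 2) + (((m - n + 1) div 2 + 1) choose 2))"
      by (simp only: dyoke_dist_u0[OF n assms(2)] abs_dev_sum_eq_choose[OF c(1)] nat_int c(2))
  next
    assume C: "\<not> (even (m - n) \<or> n \<le> (m + 2) div 2)"
    then have "?d0 + enat (n - (m + 2) div 2) \<le> ?d1"
      by (intro dyoke_dist_u1_ge[OF n assms(2)]) auto
    moreover have E: "?E = n - (m + 2) div 2"
      using C by auto
    then have "?d1 \<le> ?d0 + enat (n - (m + 2) div 2)"
      using upper[OF dyoke_vert_u1[OF n assms(2)]] by simp
    ultimately show d1: "?d1 = ?d0 + enat (n - (m + 2) div 2)"
      by (rule antisym[rotated])
    show "dyoke_ecc0 n m = ?d1"
      using upper unfolding E d1[symmetric] by (rule dyoke_ecc0_eqI[OF dyoke_vert_u1[OF n assms(2)]])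
  qed
qed

end
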